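(* Let $T\in\{0,1\}$ and $\hat Y\in\{0,1\}$ be binary random variables on a common probability space, where $T$ is the treatment (intervention) variable and $\hat Y$ is the indicator outcome defined below, and suppose $\mathbb{P}(T=1)=\mathbb{P}(T=0)=\tfrac12$ and all conditional probabilities and denominators below are well defined (nonzero conditioning events). Assume $\hat Y$ is monotonic with respect to $T$. Define $$\delta_{\mathrm{ADCE}} := \mathbb{P}(\hat Y=1\mid T=1, s(T=1)) - \mathbb{P}(\hat Y=1\mid T=0, s(T=0)),$$ $$\delta_{\mathrm{PN}} := \frac{\mathbb{P}(\hat Y=0)-\mathbb{P}(\hat Y=0\mid \mathrm{do}(T=1))}{\mathbb{P}(T=0,\hat Y=0)},\qquad \delta_{\mathrm{PS}} := \frac{\mathbb{P}(\hat Y=0\mid \mathrm{do}(T=0))-\mathbb{P}(\hat Y=0)}{\mathbb{P}(T=1,\hat Y=1)},$$ and set $\alpha:=\mathbb{P}(\hat Y=1\mid T=1,s(T=1))$ and $\beta:=\mathbb{P}(\hat Y=0\mid T=0,s(T=0))$. Then $$\delta_{\mathrm{ADCE}} = \frac{\alpha}{2}\,\delta_{\mathrm{PS}} + \frac{\beta}{2}\,\delta_{\mathrm{PN}}.$$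
   Context: Setting: an input question $x$ to a language model is decomposed into a deep structure $d$ (core semantics) and a surface structure $s$ (presentation form); the model output is $Y(x)$, and $Y^{\mathrm{origin}}$ denotes the output on the unintervened input. The treatment $T$ is an intervention on the input: $T=0$ means the intervention alters the surface structure $s$ but preserves the deep structure $d$; $T=1$ means the intervention alters both $s$ and $d$. $s(T=t)$ denotes the value the surface structure takes under treatment $T=t$; it is determined by $T$ (the event $T=t$ entails the surface structure $s(T=t)$). The outcome is $\hat Y = 1$ if the model's output after intervention differs from $Y^{\mathrm{origin}}$ and $\hat Y=0$ if it equals it. There is no confounding between $T$ and $\hat Y$, so $\mathbb{P}(\hat Y=y\mid \mathrm{do}(T=t))=\mathbb{P}(\hat Y=y\mid T=t)$. Monotonicity of $\hat Y$ in $T$ is the standard condition (Tian–Pearl) under which the probability of necessity $\mathrm{PN}=\mathbb{P}(\hat Y'_{T'}\mid T,\hat Y)$ and probability of sufficiency $\mathrm{PS}$ are identified by the displayed formulas; here $\delta_{\mathrm{PN}},\delta_{\mathrm{PS}}$ are evaluated at $(T=0,\hat Y=0)$. *)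

theory Defs
  imports "HOL-Probability.Probability"
begin

definition ev :: "'a measure \<Rightarrow> ('a \<Rightarrow> bool) \<Rightarrow> 'a set" where
  "ev M P = {\<omega> \<in> space M. P \<omega>}"

definition cprob :: "'a measure \<Rightarrow> ('a \<Rightarrow> bool) \<Rightarrow> ('a \<Rightarrow> bool) \<Rightarrow> real" where
  "cprob M A B = measure M (ev M (\<lambda>\<omega>. A \<omega> \<and> B \<omega>)) / measure M (ev M B)"

text \<open>Interventional probability P(Yhat = y | do(T = t)), via potential outcomes
  Y0 (outcome under T=0) and Y1 (outcome under T=1): P(Y_t = y).\<close>
definition do_prob :: "'a measure \<Rightarrow> ('a \<Rightarrow> bool) \<Rightarrow> ('a \<Rightarrow> bool) \<Rightarrow> bool \<Rightarrow> bool \<Rightarrow> real" where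
  "do_prob M Y0 Y1 t y = measure M (ev M (\<lambda>\<omega>. (if t then Y1 \<omega> else Y0 \<omega>) = y))"

end

theory Submission
  imports Defs
begin

text \<open>Under the balanced design P(T=1) = P(T=0) = 1/2, every probability conditioned on
  a value of T is twice a cell of the joint table of (T, Yhat), say
  a = P(T, Yhat), b = P(T, \<not>Yhat), c = P(\<not>T, Yhat), d = P(\<not>T, \<not>Yhat).
  The surface-structure conditions are implied by the treatment and drop out, and absence of
  confounding turns the interventional probabilities into such conditionals.  Then
  \<alpha>/2 \<delta>PS and \<beta>/2 \<delta>PN both equal d - b, while \<delta>ADCE = 2a - 2c = 2(d - b) because
  a + b = c + d = 1/2.\<close>

lemma ev_in_sets:
  assumes "P \<in> M \<rightarrow>\<^sub>M count_space UNIV"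
  shows "ev M P \<in> sets M" and "ev M (\<lambda>\<omega>. \<not> P \<omega>) \<in> sets M"
  using assms by (simp_all add: ev_def pred_def[symmetric])

lemma (in finite_measure) measure_ev_split:
  assumes "ev M A \<in> sets M" "ev M B \<in> sets M"
  shows "measure M (ev M A)
           = measure M (ev M (\<lambda>\<omega>. A \<omega> \<and> B \<omega>)) + measure M (ev M (\<lambda>\<omega>. A \<omega> \<and> \<not> B \<omega>))"
proof -
  have "ev M (\<lambda>\<omega>. A \<omega> \<and> B \<omega>) = ev M A \<inter> ev M B"
    and "ev M (\<lambda>\<omega>. A \<omega> \<and> \<not> B \<omega>) = ev M A - ev M B"
    by (auto simp: ev_def)
  then show ?thesis
    using assms finite_measure_Diff'[of "ev M A" "ev M B"]
    by (simp add: Int_commute)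
qed

lemma cprob_conj_implied:
  assumes "\<And>\<omega>. \<omega> \<in> space M \<Longrightarrow> B \<omega> \<Longrightarrow> C \<omega>"
  shows "cprob M A (\<lambda>\<omega>. B \<omega> \<and> C \<omega>) = cprob M A B"
proof -
  have "ev M (\<lambda>\<omega>. B \<omega> \<and> C \<omega>) = ev M B" "ev M (\<lambda>\<omega>. A \<omega> \<and> B \<omega> \<and> C \<omega>) = ev M (\<lambda>\<omega>. A \<omega> \<and> B \<omega>)"
    using assms by (auto simp: ev_def)
  then show ?thesis by (simp add: cprob_def)
qed

lemma cprob_half:
  assumes "measure M (ev M B) = 1/2"
  shows "cprob M A B = 2 * measure M (ev M (\<lambda>\<omega>. B \<omega> \<and> A \<omega>))"
  unfolding cprob_def assms by (simp add: conj_commute)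

lemma balanced_table_identity:
  fixes a b c d :: real
  assumes "a + b = 1/2" "c + d = 1/2" "a \<noteq> 0" "d \<noteq> 0"
  shows "2 * a - 2 * c = (2 * a) / 2 * ((2 * d - (b + d)) / a) + (2 * d) / 2 * ((b + d - 2 * b) / d)"
proof -
  have PS: "(2 * a) / 2 * ((2 * d - (b + d)) / a) = d - b" using \<open>a \<noteq> 0\<close> by (simp add: field_simps)
  have PN: "(2 * d) / 2 * ((b + d - 2 * b) / d) = d - b" using \<open>d \<noteq> 0\<close> by (simp add: field_simps)
  show ?thesis unfolding PS PN using assms(1,2) by linarith
qed

theorem theorem1:
  fixes M :: "'a measure"
    and T Yhat Y0 Y1 :: "'a \<Rightarrow> bool"
    and S :: "'a \<Rightarrow> 'b" and s :: "bool \<Rightarrow> 'b"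
  assumes "prob_space M"
    and "T \<in> M \<rightarrow>\<^sub>M count_space UNIV"
    and "Yhat \<in> M \<rightarrow>\<^sub>M count_space UNIV"
    and "Y0 \<in> M \<rightarrow>\<^sub>M count_space UNIV"
    and "Y1 \<in> M \<rightarrow>\<^sub>M count_space UNIV"
    and "S \<in> M \<rightarrow>\<^sub>M count_space UNIV"
    \<comment> \<open>the event T = t entails the surface structure s(T=t)\<close>
    and surf: "\<And>\<omega> t. \<omega> \<in> space M \<Longrightarrow> T \<omega> = t \<Longrightarrow> S \<omega> = s t"
    \<comment> \<open>consistency: observed outcome is the potential outcome under the received treatment\<close>
    and consist: "\<And>\<omega>. \<omega> \<in> space M \<Longrightarrow> Yhat \<omega> = (if T \<omega> then Y1 \<omega> else Y0 \<omega>)"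
    \<comment> \<open>no confounding: P(Yhat = y | do(T=t)) = P(Yhat = y | T = t)\<close>
    and noconf: "\<And>t y. do_prob M Y0 Y1 t y = cprob M (\<lambda>\<omega>. Yhat \<omega> = y) (\<lambda>\<omega>. T \<omega> = t)"
    \<comment> \<open>monotonicity of Yhat in T (Tian--Pearl)\<close>
    and mono: "AE \<omega> in M. Y0 \<omega> \<longrightarrow> Y1 \<omega>"
    and half1: "measure M (ev M (\<lambda>\<omega>. T \<omega>)) = 1/2"
    and half0: "measure M (ev M (\<lambda>\<omega>. \<not> T \<omega>)) = 1/2"
    and nz1: "measure M (ev M (\<lambda>\<omega>. T \<omega> \<and> S \<omega> = s True)) \<noteq> 0"
    and nz0: "measure M (ev M (\<lambda>\<omega>. \<not> T \<omega> \<and> S \<omega> = s False)) \<noteq> 0"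
    and nzPS: "measure M (ev M (\<lambda>\<omega>. T \<omega> \<and> Yhat \<omega>)) \<noteq> 0"
    and nzPN: "measure M (ev M (\<lambda>\<omega>. \<not> T \<omega> \<and> \<not> Yhat \<omega>)) \<noteq> 0"
  shows
    "let
       dADCE = cprob M (\<lambda>\<omega>. Yhat \<omega>) (\<lambda>\<omega>. T \<omega> \<and> S \<omega> = s True)
             - cprob M (\<lambda>\<omega>. Yhat \<omega>) (\<lambda>\<omega>. \<not> T \<omega> \<and> S \<omega> = s False);
       dPN = (measure M (ev M (\<lambda>\<omega>. \<not> Yhat \<omega>)) - do_prob M Y0 Y1 True False)
             / measure M (ev M (\<lambda>\<omega>. \<not> T \<omega> \<and> \<not> Yhat \<omega>));
       dPS = (do_prob M Y0 Y1 False False - measure M (ev M (\<lambda>\<omega>. \<not> Yhat \<omega>)))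
             / measure M (ev M (\<lambda>\<omega>. T \<omega> \<and> Yhat \<omega>));
       \<alpha> = cprob M (\<lambda>\<omega>. Yhat \<omega>) (\<lambda>\<omega>. T \<omega> \<and> S \<omega> = s True);
       \<beta> = cprob M (\<lambda>\<omega>. \<not> Yhat \<omega>) (\<lambda>\<omega>. \<not> T \<omega> \<and> S \<omega> = s False)
     in dADCE = \<alpha> / 2 * dPS + \<beta> / 2 * dPN"
proof -
  interpret prob_space M by fact
  define a where "a = measure M (ev M (\<lambda>\<omega>. T \<omega> \<and> Yhat \<omega>))"
  define b where "b = measure M (ev M (\<lambda>\<omega>. T \<omega> \<and> \<not> Yhat \<omega>))"
  define c where "c = measure M (ev M (\<lambda>\<omega>. \<not> T \<omega> \<and> Yhat \<omega>))"
  define d where "d = measure M (ev M (\<lambda>\<omega>. \<not> T \<omega> \<and> \<not> Yhat \<omega>))"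
  note T_sets = ev_in_sets[OF assms(2)] and Y_sets = ev_in_sets[OF assms(3)]
  have ab: "a + b = 1/2" using measure_ev_split[OF T_sets(1) Y_sets(1)] half1 by (simp add: a_def b_def)
  have cd: "c + d = 1/2" using measure_ev_split[OF T_sets(2) Y_sets(1)] half0 by (simp add: c_def d_def)
  have not_Y: "measure M (ev M (\<lambda>\<omega>. \<not> Yhat \<omega>)) = b + d"
    using measure_ev_split[OF Y_sets(2) T_sets(1)] by (simp add: b_def d_def conj_commute)
  have drop_s1: "cprob M A (\<lambda>\<omega>. T \<omega> \<and> S \<omega> = s True) = cprob M A T" for A
    using surf by (intro cprob_conj_implied) auto
  have drop_s0: "cprob M A (\<lambda>\<omega>. \<not> T \<omega> \<and> S \<omega> = s False) = cprob M A (\<lambda>\<omega>. \<not> T \<omega>)" for A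
    using surf by (intro cprob_conj_implied) auto
  have do1: "do_prob M Y0 Y1 True False = 2 * b"
    unfolding noconf b_def using cprob_half[OF half1] by simp
  have do0: "do_prob M Y0 Y1 False False = 2 * d"
    unfolding noconf d_def using cprob_half[OF half0] by simp
  show ?thesis
    unfolding Let_def drop_s1 drop_s0 cprob_half[OF half1] cprob_half[OF half0] do1 do0 not_Y
    using balanced_table_identity[OF ab cd] nzPS nzPN by (simp add: a_def b_def c_def d_def)
qed

end
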